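(* Let $f\ge 1$ and $k\ge 2$ be integers, let there be $n=kf+1$ validators, each maintaining a local DAG as described in the context (DAG-Rider setting). Let $p_i$ be a correct validator that completes wave $w$, i.e. $DAG_i[\mathit{round}(w,4)]$ contains at least $(k-1)f+1$ vertices. Then there exist $V\subseteq DAG_i[\mathit{round}(w,1)]$ and $U\subseteq DAG_i[\mathit{round}(w,4)]$ with $|V|\ge (k-1)f+1$ and $|U|\ge (k-1)f+1$ such that for every $v\in V$ and every $u\in U$ there is a path from $u$ to $v$.
   Context: Setting: $n=kf+1$ validators $p_1,\dots,p_n$, of which at most $f$ are Byzantine and the rest are correct (honest). All validators' local DAGs are subsets of one common set of vertices. Each vertex has a round number $r\ge 1$ and a source validator; for each validator and each round there is at most one vertex (no equivocation), so any two local DAGs that contain the vertex of a given validator for a given round contain the identical vertex, with identical edges. Every vertex of round $r\ge 2$ has edges to exactly $(k-1)f+1$ vertices of round $r-1$, all with distinct sources. Each validator $p_i$ has a local DAG $DAG_i$, a set of vertices closed under edges (if $u\in DAG_i$ then every vertex $u$ has an edge to is in $DAG_i$). $DAG_i[r]$ denotes the set of round-$r$ vertices of $DAG_i$. $\mathit{path}(u,v)$ ("a path from $u$ to $v$") means there is a sequence of contiguous edges leading from $u$ to $v$. Rounds are grouped into waves of 4 rounds: $\mathit{round}(w,j)=4(w-1)+j$ for $j=1,2,3,4$ and waves $w\ge 1$. A validator completes wave $w$ once its local DAG contains at least $(k-1)f+1$ vertices of $\mathit{round}(w,4)$. *)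

theory Defs
  imports Main
begin

definition wround :: "nat \<Rightarrow> nat \<Rightarrow> nat" where
  "wround w j = 4 * (w - 1) + j"

definition layer :: "('v \<Rightarrow> nat) \<Rightarrow> 'v set \<Rightarrow> nat \<Rightarrow> 'v set" where
  "layer rnd D r = {v \<in> D. rnd v = r}"

text \<open>path u v: a nonempty sequence of contiguous edges from u to v, E being the
  edge relation ((x,y) \<in> E means x has an edge to y).\<close>
definition path :: "('v \<times> 'v) set \<Rightarrow> 'v \<Rightarrow> 'v \<Rightarrow> bool" where
  "path E u v \<longleftrightarrow> (u, v) \<in> E\<^sup>+"

end

theory Submission
  imports Defs
begin

text \<open>Every vertex has \<open>m = (k-1)f+1\<close> parents in the previous round, which has at most
  \<open>n = m + f\<close> vertices. Double counting the edges between rounds 3 and 2 of the wave gives a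
  round-2 vertex \<open>z\<close> referenced by more than \<open>|Y| - m\<close> of the round-3 vertices \<open>Y\<close>, so by
  pigeonhole each round-4 vertex has a parent referencing \<open>z\<close>. The round-1 parents of \<open>z\<close>
  are then reachable from every round-4 vertex.\<close>

definition parents :: "('v \<times> 'v) set \<Rightarrow> ('v \<Rightarrow> nat) \<Rightarrow> 'v \<Rightarrow> 'v set" where
  "parents E rnd v = {u \<in> E `` {v}. rnd u = rnd v - 1}"

lemma parents_subset_layer:
  assumes "v \<in> layer rnd D r" and "\<forall>u\<in>D. E `` {u} \<subseteq> D"
  shows "parents E rnd v \<subseteq> layer rnd D (r - 1)"
  using assms unfolding parents_def layer_def by auto

lemma inj_on_src_layer:
  assumes "D \<subseteq> Vert" and "\<forall>u\<in>Vert. \<forall>v\<in>Vert. rnd u = rnd v \<and> src u = src v \<longrightarrow> u = v"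
  shows "inj_on src (layer rnd D r)"
  using assms unfolding inj_on_def layer_def by blast

lemma Int_nonempty_if_card_add_gt:
  assumes "finite Y" "A \<subseteq> Y" "B \<subseteq> Y" "card Y < card A + card B"
  shows "A \<inter> B \<noteq> {}"
proof
  assume "A \<inter> B = {}"
  then have "card (A \<union> B) = card A + card B"
    using assms(1-3) by (meson card_Un_disjoint finite_subset)
  moreover have "card (A \<union> B) \<le> card Y"
    using assms(1-3) by (simp add: card_mono)
  ultimately show False using assms(4) by simp
qed

lemma exists_popular_parent:
  fixes P :: "'a \<Rightarrow> 'b set"
  assumes fin: "finite Y" "finite Z"
    and P: "\<forall>x\<in>Y. P x \<subseteq> Z \<and> card (P x) = m"
    and Y_bounds: "m \<le> card Y" "card Y \<le> m + f"
    and Z_bound: "card Z \<le> m + f"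
    and "f < m"
  shows "\<exists>z\<in>Z. card Y < card {x \<in> Y. z \<in> P x} + m"
proof (rule ccontr)
  assume "\<not> ?thesis"
  then have few: "\<forall>z\<in>Z. card {x \<in> Y. z \<in> P x} \<le> card Y - m" by auto
  obtain t where t: "card Y = m + t" "t \<le> f"
    using Y_bounds by (metis add_le_cancel_left le_iff_add)
  have "m * card Y = (\<Sum>z\<in>Z. card {x \<in> Y. z \<in> P x})"
  proof -
    have "\<forall>x\<in>Y. card {z \<in> Z. z \<in> P x} = m"
      using P by (simp add: Int_absorb1 Collect_conj_eq Int_def[symmetric])
    from sum_multicount[OF fin(2,1) this] show ?thesis by simp
  qed
  also have "\<dots> \<le> card Z * t"
    using sum_bounded_above[of Z _ "card Y - m"] few t by simp
  also have "\<dots> \<le> (m + f) * t"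
    using Z_bound by simp
  finally have "m * m + m * t \<le> m * t + f * t"
    using t by (simp add: algebra_simps)
  then have "m * m \<le> f * t" by simp
  also have "\<dots> \<le> f * f" using t(2) by simp
  finally have "m * m \<le> f * f" .
  then show False
    using \<open>f < m\<close> by (metis mult_strict_mono' not_le zero_le)
qed

lemma common_grandparent:
  fixes P :: "'a \<Rightarrow> 'a set"
  assumes fin: "finite Y" "finite Z"
    and P_U: "\<forall>u\<in>U. P u \<subseteq> Y \<and> card (P u) = m"
    and P_Y: "\<forall>x\<in>Y. P x \<subseteq> Z \<and> card (P x) = m"
    and "U \<noteq> {}" "card Y \<le> m + f" "card Z \<le> m + f" "f < m"
  shows "\<exists>z\<in>Z. \<forall>u\<in>U. \<exists>x\<in>P u. z \<in> P x"
proof -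
  have "m \<le> card Y"
    using P_U \<open>U \<noteq> {}\<close> fin(1) by (metis card_mono ex_in_conv)
  then obtain z where z: "z \<in> Z" "card Y < card {x \<in> Y. z \<in> P x} + m"
    using exists_popular_parent[OF fin P_Y] assms(6-8) by blast
  have "P u \<inter> {x \<in> Y. z \<in> P x} \<noteq> {}" if "u \<in> U" for u
    using Int_nonempty_if_card_add_gt[OF fin(1), of "P u" "{x \<in> Y. z \<in> P x}"] P_U that z(2)
    by auto
  then show ?thesis using z(1) by blast
qed

theorem lemma2:
  fixes n f k :: nat
    and Vert :: "'v set"            \<comment> \<open>common set of all vertices\<close>
    and rnd :: "'v \<Rightarrow> nat"         \<comment> \<open>round number\<close>
    and src :: "'v \<Rightarrow> nat"         \<comment> \<open>source validator, in {1..n}\<close>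
    and E :: "('v \<times> 'v) set"       \<comment> \<open>edges\<close>
    and DAG :: "nat \<Rightarrow> 'v set"     \<comment> \<open>local DAG of validator p_j\<close>
    and Correct :: "nat set"        \<comment> \<open>indices of correct validators\<close>
    and i w :: nat
  assumes f_ge: "f \<ge> 1" and k_ge: "k \<ge> 2" and n_def: "n = k * f + 1"
    and Correct_sub: "Correct \<subseteq> {1..n}"
    and byz: "card ({1..n} - Correct) \<le> f"
    and rnd_pos: "\<forall>v\<in>Vert. rnd v \<ge> 1"
    and src_range: "\<forall>v\<in>Vert. src v \<in> {1..n}"
    and no_equiv: "\<forall>u\<in>Vert. \<forall>v\<in>Vert. rnd u = rnd v \<and> src u = src v \<longrightarrow> u = v"
    and E_sub: "E \<subseteq> Vert \<times> Vert"
    and edges: "\<forall>v\<in>Vert. rnd v \<ge> 2 \<longrightarrow>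
                  card {u \<in> E `` {v}. rnd u = rnd v - 1} = (k - 1) * f + 1
                \<and> inj_on src {u \<in> E `` {v}. rnd u = rnd v - 1}"
    and DAG_sub: "\<forall>j\<in>{1..n}. DAG j \<subseteq> Vert"
    and DAG_closed: "\<forall>j\<in>{1..n}. \<forall>u\<in>DAG j. E `` {u} \<subseteq> DAG j"
    and i_correct: "i \<in> Correct"
    and w_ge: "w \<ge> 1"
    and completes: "card (layer rnd (DAG i) (wround w 4)) \<ge> (k - 1) * f + 1"
  shows "\<exists>V U. V \<subseteq> layer rnd (DAG i) (wround w 1) \<and> U \<subseteq> layer rnd (DAG i) (wround w 4)
           \<and> finite V \<and> finite U
           \<and> card V \<ge> (k - 1) * f + 1 \<and> card U \<ge> (k - 1) * f + 1
           \<and> (\<forall>v\<in>V. \<forall>u\<in>U. path E u v)"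
proof -
  define m where "m = (k - 1) * f + 1"
  define L where "L r = layer rnd (DAG i) r" for r
  define r1 where "r1 = wround w 1"
  have "i \<in> {1..n}" using i_correct Correct_sub by blast
  then have D_sub: "DAG i \<subseteq> Vert" and D_closed: "\<forall>u\<in>DAG i. E `` {u} \<subseteq> DAG i"
    using DAG_sub DAG_closed by auto
  have L_bound: "finite (L r) \<and> card (L r) \<le> m + f" for r
  proof -
    have inj: "inj_on src (L r)" and range: "src ` L r \<subseteq> {1..n}"
      using inj_on_src_layer[OF D_sub no_equiv] D_sub src_range unfolding L_def layer_def by auto
    have "n = m + f" using k_ge unfolding m_def n_def by (simp add: algebra_simps)
    moreover have "card (L r) \<le> card {1..n}" using card_inj_on_le[OF inj range] by simp
    moreover have "finite (L r)" using inj_on_finite[OF inj range] by simp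
    ultimately show ?thesis by simp
  qed
  have P: "parents E rnd v \<subseteq> L (r - 1) \<and> card (parents E rnd v) = m"
    if v: "v \<in> L r" "2 \<le> r" for v r
  proof
    show "parents E rnd v \<subseteq> L (r - 1)"
      using parents_subset_layer[OF _ D_closed] v(1) unfolding L_def by blast
    have "v \<in> Vert" "rnd v = r" using v(1) D_sub unfolding L_def layer_def by auto
    then show "card (parents E rnd v) = m" using edges v(2) unfolding parents_def m_def by auto
  qed
  have "r1 \<ge> 1" "wround w 4 = r1 + 3" unfolding r1_def wround_def by simp_all
  moreover have "f < m" using mult_le_mono1[of 1 "k - 1" f] k_ge unfolding m_def by linarith
  moreover have "L (r1 + 3) \<noteq> {}" using completes \<open>wround w 4 = r1 + 3\<close> unfolding L_def m_def by force
  ultimately obtain z where z: "z \<in> L (r1 + 1)"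
    and via: "\<forall>u\<in>L (r1 + 3). \<exists>x\<in>parents E rnd u. z \<in> parents E rnd x"
    using common_grandparent[of "L (r1 + 2)" "L (r1 + 1)" "L (r1 + 3)" "parents E rnd" m f]
      L_bound P[of _ "r1 + 3"] P[of _ "r1 + 2"] by auto
  have "path E u v" if v: "v \<in> parents E rnd z" and u: "u \<in> L (r1 + 3)" for u v
  proof -
    obtain x where "x \<in> parents E rnd u" "z \<in> parents E rnd x" using via u by blast
    then have "(u, x) \<in> E" "(x, z) \<in> E" "(z, v) \<in> E" using v unfolding parents_def by auto
    then show ?thesis unfolding path_def by (meson r_into_trancl trancl_into_trancl)
  qed
  then show ?thesis
    using P[OF z] \<open>r1 \<ge> 1\<close> L_bound completes \<open>wround w 4 = r1 + 3\<close>
    by (intro exI[of _ "parents E rnd z"] exI[of _ "L (r1 + 3)"])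
       (auto simp: L_def r1_def m_def intro: finite_subset)
qed

end
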